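(* Let $D=(V,A)$ be a digraph with minimum in-degree at least 1, and let $\mathcal{L}D=\mathcal{L}_{(A',\phi)}D$ be a partial line digraph of $D$. Then (i) the number of kernels of $D$ equals the number of kernels of $\mathcal{L}D$; (ii) the number of quasikernels of $D$ is less than or equal to the number of quasikernels of $\mathcal{L}D$.
   Context: Digraphs are loopless and without multiple arcs. For a vertex $j$, $\omega^-(j)$ is the set of arcs with terminal vertex $j$; for a set of arcs $\Omega$, $H(\Omega)=\{y:(x,y)\in\Omega\}$. The arc $(x,y)$ is also written $xy$. $d(x,y)$ denotes directed distance and $d(x,K)=\min_{y\in K}d(x,y)$. Partial line digraph: given $D=(V,A)$ with minimum in-degree at least 1, take an arc subset $A'\subseteq A$ and a surjective map $\phi:A\to A'$ such that (i) $H(A')=V$; (ii) $\phi$ restricted to $A'$ is the identity, and for every vertex $j\in V$, $\phi(\omega^-(j))\subseteq\omega^-(j)\cap A'$. The partial line digraph $\mathcal{L}_{(A',\phi)}D$ has vertex set $A'$ and arc set $\{(ij,\phi(j,k)) : ij\in A',\ (j,k)\in A\}$. A $(k,l)$-kernel is a vertex set $K$ with $d(u,v)\ge k$ for all distinct $u,v\in K$ and $d(x,K)\le l$ for every vertex $x\notin K$. A kernel is a $(2,1)$-kernel (independent and every vertex outside has an out-neighbour inside); a quasikernel is a $(2,2)$-kernel. *)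

theory Defs
  imports Main "HOL-Library.Extended_Nat"
begin

text \<open>A finite digraph (V, A): arcs are pairs of vertices, no loops
  (no multiple arcs is automatic since A is a set).\<close>
definition digraph :: "'v set \<Rightarrow> ('v \<times> 'v) set \<Rightarrow> bool" where
  "digraph V A \<longleftrightarrow> finite V \<and> A \<subseteq> V \<times> V \<and> (\<forall>(x, y) \<in> A. x \<noteq> y)"

definition min_indeg_pos :: "'v set \<Rightarrow> ('v \<times> 'v) set \<Rightarrow> bool" where
  "min_indeg_pos V A \<longleftrightarrow> (\<forall>j \<in> V. \<exists>i. (i, j) \<in> A)"

definition in_arcs :: "('v \<times> 'v) set \<Rightarrow> 'v \<Rightarrow> ('v \<times> 'v) set" where
  "in_arcs A j = {a \<in> A. snd a = j}"

definition heads :: "('v \<times> 'v) set \<Rightarrow> 'v set" where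
  "heads \<Omega> = {y. \<exists>x. (x, y) \<in> \<Omega>}"

definition pld_data :: "'v set \<Rightarrow> ('v \<times> 'v) set \<Rightarrow> ('v \<times> 'v) set
    \<Rightarrow> (('v \<times> 'v) \<Rightarrow> ('v \<times> 'v)) \<Rightarrow> bool" where
  "pld_data V A A' \<phi> \<longleftrightarrow>
     A' \<subseteq> A \<and> \<phi> ` A = A' \<and> heads A' = V \<and>
     (\<forall>a \<in> A'. \<phi> a = a) \<and>
     (\<forall>j \<in> V. \<phi> ` (in_arcs A j) \<subseteq> in_arcs A j \<inter> A')"

text \<open>Arc set of the partial line digraph (its vertex set is A').\<close>
definition pld_arcs :: "('v \<times> 'v) set \<Rightarrow> ('v \<times> 'v) set
    \<Rightarrow> (('v \<times> 'v) \<Rightarrow> ('v \<times> 'v)) \<Rightarrow> (('v \<times> 'v) \<times> ('v \<times> 'v)) set" where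
  "pld_arcs A A' \<phi> = {((i, j), \<phi> (j, k)) | i j k. (i, j) \<in> A' \<and> (j, k) \<in> A}"

text \<open>Directed distance (infinity if there is no directed path).\<close>
definition ddist :: "('v \<times> 'v) set \<Rightarrow> 'v \<Rightarrow> 'v \<Rightarrow> enat" where
  "ddist A u v = Inf {enat n | n. (u, v) \<in> A ^^ n}"

definition ddist_set :: "('v \<times> 'v) set \<Rightarrow> 'v \<Rightarrow> 'v set \<Rightarrow> enat" where
  "ddist_set A x K = (INF y\<in>K. ddist A x y)"

definition kl_kernel :: "nat \<Rightarrow> nat \<Rightarrow> 'v set \<Rightarrow> ('v \<times> 'v) set \<Rightarrow> 'v set \<Rightarrow> bool" where
  "kl_kernel k l V A K \<longleftrightarrow> K \<subseteq> V \<and>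
     (\<forall>u \<in> K. \<forall>v \<in> K. u \<noteq> v \<longrightarrow> ddist A u v \<ge> enat k) \<and>
     (\<forall>x \<in> V - K. ddist_set A x K \<le> enat l)"

definition kernel :: "'v set \<Rightarrow> ('v \<times> 'v) set \<Rightarrow> 'v set \<Rightarrow> bool" where
  "kernel V A K \<longleftrightarrow> kl_kernel 2 1 V A K"

definition quasikernel :: "'v set \<Rightarrow> ('v \<times> 'v) set \<Rightarrow> 'v set \<Rightarrow> bool" where
  "quasikernel V A K \<longleftrightarrow> kl_kernel 2 2 V A K"

end

theory Submission
  imports Defs
begin

text \<open>A set K of vertices of D corresponds to the set of arcs of A' ending in K. Walks of D
  starting at the head of an arc a \<in> A' lift to walks of the partial line digraph starting
  at a (replace each arc (j,k) by the arc \<phi>(j,k) \<in> A', which again ends in k), and arcs of the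
  partial line digraph project to arcs of D. Hence the lift of an independent, l-absorbing set
  is independent and l-absorbing, and lifting is injective because every vertex is the head of
  an arc of A'. For kernels the converse holds as well: a kernel of the partial line digraph
  contains, together with an arc a, every arc of A' with the same head (otherwise such an arc
  would be absorbed by an out-neighbour of a), so it is the lift of its set of heads.\<close>

lemma Inf_enat_le_enat_iff: "(Inf S :: enat) \<le> enat l \<longleftrightarrow> (\<exists>x\<in>S. x \<le> enat l)"
proof
  assume le: "Inf S \<le> enat l"
  then have "S \<noteq> {}" by (auto simp: Inf_enat_def)
  then have "Inf S \<in> S" by (auto simp: Inf_enat_def intro: LeastI)
  with le show "\<exists>x\<in>S. x \<le> enat l" by blast
qed (meson Inf_lower order_trans)

lemma ddist_le_enat_iff: "ddist A u v \<le> enat l \<longleftrightarrow> (\<exists>n\<le>l. (u, v) \<in> A ^^ n)"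
  unfolding ddist_def Inf_enat_le_enat_iff by auto

lemma ddist_set_le_enat_iff:
  "ddist_set A x K \<le> enat l \<longleftrightarrow> (\<exists>y\<in>K. \<exists>n\<le>l. (x, y) \<in> A ^^ n)"
  unfolding ddist_set_def Inf_enat_le_enat_iff by (auto simp: ddist_le_enat_iff)

lemma ex_relpow_le_1_iff: "(\<exists>n\<le>1. (x, y) \<in> A ^^ n) \<longleftrightarrow> x = y \<or> (x, y) \<in> A"
  by (simp add: le_Suc_eq conj_disj_distribR ex_disj_distrib)

lemma enat_2_le_ddist_iff:
  assumes "u \<noteq> v"
  shows "enat 2 \<le> ddist A u v \<longleftrightarrow> (u, v) \<notin> A"
proof -
  have "enat 2 \<le> ddist A u v \<longleftrightarrow> \<not> ddist A u v \<le> enat 1"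
    by (cases "ddist A u v") auto
  also have "\<dots> \<longleftrightarrow> (u, v) \<notin> A"
    unfolding ddist_le_enat_iff ex_relpow_le_1_iff using assms by simp
  finally show ?thesis .
qed

lemma kl_kernel_2_iff:
  "kl_kernel 2 l V A K \<longleftrightarrow> K \<subseteq> V \<and> (\<forall>u\<in>K. \<forall>v\<in>K. (u, v) \<notin> A \<or> u = v) \<and>
     (\<forall>x\<in>V - K. \<exists>y\<in>K. \<exists>n\<le>l. (x, y) \<in> A ^^ n)"
  unfolding kl_kernel_def ddist_set_le_enat_iff by (auto simp: enat_2_le_ddist_iff)

lemma kernel_iff:
  "kernel V A K \<longleftrightarrow> K \<subseteq> V \<and> (\<forall>u\<in>K. \<forall>v\<in>K. (u, v) \<notin> A \<or> u = v) \<and>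
     (\<forall>x\<in>V - K. \<exists>y\<in>K. (x, y) \<in> A)"
  unfolding kernel_def kl_kernel_2_iff ex_relpow_le_1_iff by fastforce

locale partial_line_digraph =
  fixes V :: "'v set" and A A' :: "('v \<times> 'v) set" and \<phi> :: "'v \<times> 'v \<Rightarrow> 'v \<times> 'v"
  assumes digraph: "digraph V A" and pld: "pld_data V A A' \<phi>"
begin

abbreviation LD :: "(('v \<times> 'v) \<times> ('v \<times> 'v)) set" where
  "LD \<equiv> pld_arcs A A' \<phi>"

definition lift :: "'v set \<Rightarrow> ('v \<times> 'v) set" where
  "lift K = {a \<in> A'. snd a \<in> K}"

lemma arcs_subset: "A \<subseteq> V \<times> V" and arc_not_loop: "(x, y) \<in> A \<Longrightarrow> x \<noteq> y"
  using digraph unfolding digraph_def by auto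

lemma A'_subset: "A' \<subseteq> A"
  using pld unfolding pld_data_def by blast

lemma finite_A': "finite A'"
  using digraph A'_subset unfolding digraph_def by (meson finite_SigmaI finite_subset)

lemma snd_A'_in_V: "a \<in> A' \<Longrightarrow> snd a \<in> V"
  using A'_subset arcs_subset by auto

lemma ex_A'_with_head:
  assumes "j \<in> V"
  shows "\<exists>a\<in>A'. snd a = j"
proof -
  from assms pld obtain i where "(i, j) \<in> A'"
    unfolding pld_data_def heads_def by blast
  then show ?thesis
    by force
qed

lemma phi_arc:
  assumes "(j, k) \<in> A"
  shows "\<phi> (j, k) \<in> A' \<and> snd (\<phi> (j, k)) = k"
proof -
  have "k \<in> V" and "(j, k) \<in> in_arcs A k"
    using assms arcs_subset by (auto simp: in_arcs_def)
  with pld have "\<phi> (j, k) \<in> in_arcs A k \<inter> A'"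
    unfolding pld_data_def by blast
  then show ?thesis
    by (simp add: in_arcs_def)
qed

lemma LD_iff: "(a, b) \<in> LD \<longleftrightarrow> a \<in> A' \<and> (snd a, snd b) \<in> A \<and> b = \<phi> (snd a, snd b)"
proof
  assume "(a, b) \<in> LD"
  then obtain i j k where "a = (i, j)" "(i, j) \<in> A'" "(j, k) \<in> A" "b = \<phi> (j, k)"
    unfolding pld_arcs_def by blast
  then show "a \<in> A' \<and> (snd a, snd b) \<in> A \<and> b = \<phi> (snd a, snd b)"
    using phi_arc by simp
next
  assume "a \<in> A' \<and> (snd a, snd b) \<in> A \<and> b = \<phi> (snd a, snd b)"
  then show "(a, b) \<in> LD"
    unfolding pld_arcs_def by (cases a) auto
qed

lemma walk_lift:
  assumes "a \<in> A'" and "(snd a, y) \<in> A ^^ n"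
  shows "\<exists>b\<in>A'. (a, b) \<in> LD ^^ n \<and> snd b = y"
  using assms(2)
proof (induction n arbitrary: y)
  case (Suc n)
  then obtain z where "(snd a, z) \<in> A ^^ n" and zy: "(z, y) \<in> A"
    by auto
  with Suc.IH obtain b where "b \<in> A'" "(a, b) \<in> LD ^^ n" "snd b = z"
    by blast
  moreover have "(b, \<phi> (z, y)) \<in> LD" and "\<phi> (z, y) \<in> A'" "snd (\<phi> (z, y)) = y"
    using LD_iff phi_arc zy \<open>b \<in> A'\<close> \<open>snd b = z\<close> by auto
  ultimately show ?case
    by auto
qed (use assms(1) in auto)

lemma snd_image_lift: "K \<subseteq> V \<Longrightarrow> snd ` lift K = K"
  unfolding lift_def using ex_A'_with_head by force

lemma lift_kl_kernel_2:
  assumes "kl_kernel 2 l V A K"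
  shows "kl_kernel 2 l A' LD (lift K)"
  unfolding kl_kernel_2_iff
proof (intro conjI ballI)
  show "lift K \<subseteq> A'"
    unfolding lift_def by blast
next
  fix u v assume "u \<in> lift K" "v \<in> lift K"
  then show "(u, v) \<notin> LD \<or> u = v"
    using assms arc_not_loop unfolding kl_kernel_2_iff lift_def LD_iff by blast
next
  fix x assume x: "x \<in> A' - lift K"
  then have "snd x \<in> V - K"
    using snd_A'_in_V unfolding lift_def by blast
  then obtain y n where "y \<in> K" "n \<le> l" "(snd x, y) \<in> A ^^ n"
    using assms unfolding kl_kernel_2_iff by blast
  with x walk_lift show "\<exists>b\<in>lift K. \<exists>n\<le>l. (x, b) \<in> LD ^^ n"
    unfolding lift_def by blast
qed

lemma kernel_LD_closed_under_head:
  assumes K': "kernel A' LD K'" and a: "a \<in> A'" and b: "b \<in> K'" and head: "snd a = snd b"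
  shows "a \<in> K'"
proof (rule ccontr)
  assume "a \<notin> K'"
  then obtain c where c: "c \<in> K'" "(a, c) \<in> LD"
    using K' a unfolding kernel_iff by blast
  then have "(snd a, snd c) \<in> A" and c_eq: "c = \<phi> (snd a, snd c)"
    unfolding LD_iff by blast+
  moreover have "b \<in> A'"
    using K' b unfolding kernel_iff by blast
  ultimately have "(b, c) \<in> LD" and "b \<noteq> c"
    using head arc_not_loop unfolding LD_iff by auto
  then show False
    using K' b c(1) unfolding kernel_iff by blast
qed

lemma kernel_LD_eq_lift:
  assumes K': "kernel A' LD K'"
  shows "lift (snd ` K') = K'"
proof
  show "lift (snd ` K') \<subseteq> K'"
    unfolding lift_def using kernel_LD_closed_under_head[OF K'] by blast
  show "K' \<subseteq> lift (snd ` K')"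
    using K' unfolding kernel_iff lift_def by blast
qed

lemma kernel_snd_image:
  assumes K': "kernel A' LD K'"
  shows "kernel V A (snd ` K')"
  unfolding kernel_iff
proof (intro conjI ballI)
  show "snd ` K' \<subseteq> V"
    using K' snd_A'_in_V unfolding kernel_iff by blast
next
  fix u v assume u: "u \<in> snd ` K'" and v: "v \<in> snd ` K'"
  show "(u, v) \<notin> A \<or> u = v"
  proof (rule disjCI)
    assume "u \<noteq> v"
    show "(u, v) \<notin> A"
    proof
      assume uv: "(u, v) \<in> A"
      obtain a where a: "a \<in> K'" "snd a = u"
        using u by blast
      have "\<phi> (u, v) \<in> lift (snd ` K')"
        using phi_arc[OF uv] v unfolding lift_def by simp
      then have "\<phi> (u, v) \<in> K'"
        unfolding kernel_LD_eq_lift[OF K'] .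
      moreover have "a \<in> A'"
        using K' a(1) unfolding kernel_iff by blast
      then have "(a, \<phi> (u, v)) \<in> LD"
        using a(2) uv phi_arc[OF uv] unfolding LD_iff by simp
      moreover have "a \<noteq> \<phi> (u, v)"
        using a(2) phi_arc[OF uv] \<open>u \<noteq> v\<close> by auto
      ultimately show False
        using K' a(1) unfolding kernel_iff by blast
    qed
  qed
next
  fix x assume x: "x \<in> V - snd ` K'"
  then obtain a where a: "a \<in> A'" "snd a = x" "a \<notin> K'"
    using ex_A'_with_head by force
  then obtain c where "c \<in> K'" "(a, c) \<in> LD"
    using K' unfolding kernel_iff by blast
  with a(2) show "\<exists>y\<in>snd ` K'. (x, y) \<in> A"
    unfolding LD_iff by blast
qed

lemma bij_betw_lift_kernels: "bij_betw lift {K. kernel V A K} {K'. kernel A' LD K'}"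
proof (rule bij_betw_byWitness[where f' = "image snd"])
  show "\<forall>K\<in>{K. kernel V A K}. snd ` lift K = K"
    using snd_image_lift unfolding kernel_iff by blast
  show "\<forall>K'\<in>{K'. kernel A' LD K'}. lift (snd ` K') = K'"
    using kernel_LD_eq_lift by blast
  show "lift ` {K. kernel V A K} \<subseteq> {K'. kernel A' LD K'}"
    using lift_kl_kernel_2 unfolding kernel_def by blast
  show "image snd ` {K'. kernel A' LD K'} \<subseteq> {K. kernel V A K}"
    using kernel_snd_image by blast
qed

lemma card_quasikernels_le: "card {K. quasikernel V A K} \<le> card {K'. quasikernel A' LD K'}"
proof (rule card_inj_on_le)
  show "inj_on lift {K. quasikernel V A K}"
    by (rule inj_on_inverseI[where g = "image snd"])
      (simp add: snd_image_lift quasikernel_def kl_kernel_2_iff)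
  show "lift ` {K. quasikernel V A K} \<subseteq> {K'. quasikernel A' LD K'}"
    using lift_kl_kernel_2 unfolding quasikernel_def by blast
  have "{K'. quasikernel A' LD K'} \<subseteq> Pow A'"
    unfolding quasikernel_def kl_kernel_def by blast
  then show "finite {K'. quasikernel A' LD K'}"
    using finite_A' finite_subset by blast
qed

end

theorem corollary2p5:
  fixes V :: "'v set" and A A' :: "('v \<times> 'v) set"
    and \<phi> :: "('v \<times> 'v) \<Rightarrow> ('v \<times> 'v)"
  assumes "digraph V A" and "min_indeg_pos V A" and "pld_data V A A' \<phi>"
  shows "card {K. kernel V A K} = card {K. kernel A' (pld_arcs A A' \<phi>) K} \<and>
         card {K. quasikernel V A K} \<le> card {K. quasikernel A' (pld_arcs A A' \<phi>) K}"
proof -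
  interpret partial_line_digraph V A A' \<phi>
    using assms(1,3) by unfold_locales
  show ?thesis
    using bij_betw_same_card[OF bij_betw_lift_kernels] card_quasikernels_le by blast
qed

end
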